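(* A Turing degree $\mathbf{d}$ is low for embeddings if and only if it is low for bi-embeddings.
   Context: A Turing degree $\mathbf{d}$ is low for embeddings if for all computable structures $\mathcal{A},\mathcal{B}$: whenever there is a $\mathbf{d}$-computable isomorphic embedding $f\colon\mathcal{A}\hookrightarrow\mathcal{B}$, there is a computable isomorphic embedding $g\colon\mathcal{A}\hookrightarrow\mathcal{B}$. Write $\mathcal{A}\approx_{\mathbf{d}}\mathcal{B}$ if there are $\mathbf{d}$-computable embeddings $\mathcal{A}\hookrightarrow\mathcal{B}$ and $\mathcal{B}\hookrightarrow\mathcal{A}$. The degree $\mathbf{d}$ is low for bi-embeddings if for all computable structures $\mathcal{A},\mathcal{B}$, $\mathcal{A}\approx_{\mathbf{d}}\mathcal{B}$ implies $\mathcal{A}\approx_{\mathbf{0}}\mathcal{B}$. *)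

theory Defs
  imports Main "HOL-Library.Nat_Bijection"
begin

datatype recf =
    Zero
  | Succ
  | Proj nat
  | Comp recf "recf list"
  | Prim recf recf
  | Mu recf
  | Orc

inductive eval :: "nat set \<Rightarrow> recf \<Rightarrow> nat list \<Rightarrow> nat \<Rightarrow> bool" for X :: "nat set" where
  eval_zero: "eval X Zero xs 0"
| eval_succ: "eval X Succ (x # xs) (Suc x)"
| eval_proj: "i < length xs \<Longrightarrow> eval X (Proj i) xs (xs ! i)"
| eval_orc: "eval X Orc (x # xs) (if x \<in> X then 1 else 0)"
| eval_comp: "list_all2 (\<lambda>g y. eval X g xs y) gs ys \<Longrightarrow> eval X f ys z
      \<Longrightarrow> eval X (Comp f gs) xs z"
| eval_prim0: "eval X f xs y \<Longrightarrow> eval X (Prim f g) (0 # xs) y"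
| eval_primS: "eval X (Prim f g) (n # xs) y \<Longrightarrow> eval X g (y # n # xs) z
      \<Longrightarrow> eval X (Prim f g) (Suc n # xs) z"
| eval_mu: "eval X f (n # xs) 0 \<Longrightarrow> (\<forall>m<n. \<exists>y. eval X f (m # xs) (Suc y))
      \<Longrightarrow> eval X (Mu f) xs n"

text \<open>A total function is X-computable (computable relative to the oracle set X).
  A Turing degree d is represented by any set X in it; 0 by the empty set.\<close>
definition comp_fun :: "nat set \<Rightarrow> (nat \<Rightarrow> nat) \<Rightarrow> bool" where
  "comp_fun X f \<longleftrightarrow> (\<exists>p. \<forall>x. eval X p [x] (f x))"

definition comp_set :: "nat set \<Rightarrow> nat set \<Rightarrow> bool" where
  "comp_set X A \<longleftrightarrow> comp_fun X (\<lambda>x. if x \<in> A then 1 else 0)"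

text \<open>A language: a set of relation symbols with arities and a set of function
  symbols with arities (constants are 0-ary function symbols).\<close>
record signature =
  rels :: "nat set"
  rar  :: "nat \<Rightarrow> nat"
  funs :: "nat set"
  far  :: "nat \<Rightarrow> nat"

record struc =
  univ :: "nat set"
  rel  :: "nat \<Rightarrow> nat list \<Rightarrow> bool"
  fn   :: "nat \<Rightarrow> nat list \<Rightarrow> nat"

definition comp_sig :: "signature \<Rightarrow> bool" where
  "comp_sig L \<longleftrightarrow> comp_set {} (rels L) \<and> comp_fun {} (rar L)
                 \<and> comp_set {} (funs L) \<and> comp_fun {} (far L)"

definition wf_struc :: "signature \<Rightarrow> struc \<Rightarrow> bool" where
  "wf_struc L A \<longleftrightarrow> univ A \<noteq> {} \<and>
     (\<forall>i \<in> funs L. \<forall>as. length as = far L i \<and> set as \<subseteq> univ A \<longrightarrow> fn A i as \<in> univ A)"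

definition rel_diag :: "signature \<Rightarrow> struc \<Rightarrow> nat set" where
  "rel_diag L A = {list_encode (i # as) | i as. i \<in> rels L \<and> length as = rar L i
                      \<and> set as \<subseteq> univ A \<and> rel A i as}"

definition fun_table :: "signature \<Rightarrow> struc \<Rightarrow> nat \<Rightarrow> nat" where
  "fun_table L A n = (case list_decode n of
       [] \<Rightarrow> 0
     | i # as \<Rightarrow> (if i \<in> funs L \<and> length as = far L i \<and> set as \<subseteq> univ A
                  then fn A i as else 0))"

definition comp_struc :: "signature \<Rightarrow> struc \<Rightarrow> bool" where
  "comp_struc L A \<longleftrightarrow> wf_struc L A \<and> comp_set {} (univ A)
      \<and> comp_set {} (rel_diag L A) \<and> comp_fun {} (fun_table L A)"

text \<open>Isomorphic embedding of A into B (as a map on natural numbers; only its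
  restriction to the universe of A matters).\<close>
definition is_emb :: "signature \<Rightarrow> struc \<Rightarrow> struc \<Rightarrow> (nat \<Rightarrow> nat) \<Rightarrow> bool" where
  "is_emb L A B f \<longleftrightarrow> inj_on f (univ A) \<and> f ` univ A \<subseteq> univ B
     \<and> (\<forall>i \<in> rels L. \<forall>as. length as = rar L i \<and> set as \<subseteq> univ A
            \<longrightarrow> (rel A i as \<longleftrightarrow> rel B i (map f as)))
     \<and> (\<forall>i \<in> funs L. \<forall>as. length as = far L i \<and> set as \<subseteq> univ A
            \<longrightarrow> f (fn A i as) = fn B i (map f as))"

definition emb_X :: "nat set \<Rightarrow> signature \<Rightarrow> struc \<Rightarrow> struc \<Rightarrow> bool" where
  "emb_X X L A B \<longleftrightarrow> (\<exists>f. comp_fun X f \<and> is_emb L A B f)"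

definition biemb_X :: "nat set \<Rightarrow> signature \<Rightarrow> struc \<Rightarrow> struc \<Rightarrow> bool" where
  "biemb_X X L A B \<longleftrightarrow> emb_X X L A B \<and> emb_X X L B A"

definition low_for_embeddings :: "nat set \<Rightarrow> bool" where
  "low_for_embeddings D \<longleftrightarrow> (\<forall>L A B. comp_sig L \<and> comp_struc L A \<and> comp_struc L B
       \<longrightarrow> emb_X D L A B \<longrightarrow> emb_X {} L A B)"

definition low_for_biembeddings :: "nat set \<Rightarrow> bool" where
  "low_for_biembeddings D \<longleftrightarrow> (\<forall>L A B. comp_sig L \<and> comp_struc L A \<and> comp_struc L B
       \<longrightarrow> biemb_X D L A B \<longrightarrow> biemb_X {} L A B)"

end

theory Submission
  imports Defs
begin

text \<open>Let \<open>f\<close> be a \<open>D\<close>-computable embedding of \<open>A\<close> into \<open>B\<close>. Consider the disjoint sums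
  \<open>A + B + B + \<dots>\<close> and \<open>B + B + B + \<dots>\<close>, with a relation holding between elements of the same
  summand. They are \<open>D\<close>-bi-embeddable: \<open>f\<close> on the first summand and the identity elsewhere
  embeds the first sum into the second, and shifting every summand one place to the right embeds
  the second into the first. If \<open>D\<close> is low for bi-embeddings, some computable \<open>G\<close> embeds the
  first sum into the second. As \<open>G\<close> preserves the same-summand relation, it maps the summand
  \<open>A\<close> into a single copy of \<open>B\<close>, and this restriction is a computable embedding of \<open>A\<close> into
  \<open>B\<close>. Function symbols are replaced by their graphs, so that the sums need no values on tuples
  that meet several summands.\<close>

section \<open>Computable functions of several arguments\<close>

definition comp_fun_n :: "nat set \<Rightarrow> nat \<Rightarrow> (nat list \<Rightarrow> nat) \<Rightarrow> bool" where
  "comp_fun_n X k F \<longleftrightarrow> (\<exists>p. \<forall>xs. length xs = k \<longrightarrow> eval X p xs (F xs))"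

definition comp_pred_n :: "nat set \<Rightarrow> nat \<Rightarrow> (nat list \<Rightarrow> bool) \<Rightarrow> bool" where
  "comp_pred_n X k P \<longleftrightarrow> comp_fun_n X k (\<lambda>xs. if P xs then 1 else 0)"

lemma comp_fun_n_cong:
  "comp_fun_n X k F \<Longrightarrow> (\<And>xs. length xs = k \<Longrightarrow> F xs = G xs) \<Longrightarrow> comp_fun_n X k G"
  unfolding comp_fun_n_def by metis

lemma comp_pred_n_cong:
  "comp_pred_n X k P \<Longrightarrow> (\<And>xs. length xs = k \<Longrightarrow> P xs \<longleftrightarrow> Q xs) \<Longrightarrow> comp_pred_n X k Q"
  unfolding comp_pred_n_def by (erule comp_fun_n_cong) simp

lemma comp_fun_n_Zero: "comp_fun_n X k (\<lambda>xs. 0)"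
  unfolding comp_fun_n_def by (metis eval_zero)

lemma comp_fun_n_Proj: "i < k \<Longrightarrow> comp_fun_n X k (\<lambda>xs. xs ! i)"
  unfolding comp_fun_n_def by (metis eval_proj)

lemma comp_fun_n_Succ: "comp_fun_n X 1 (\<lambda>xs. Suc (xs ! 0))"
  unfolding comp_fun_n_def
  by (rule exI[of _ Succ]) (auto simp: length_Suc_conv intro: eval_succ)

lemma comp_fun_n_Comp:
  assumes G: "comp_fun_n X (length Fs) G" and Fs: "\<forall>F\<in>set Fs. comp_fun_n X k F"
  shows "comp_fun_n X k (\<lambda>xs. G (map (\<lambda>F. F xs) Fs))"
proof -
  obtain prog where prog: "\<forall>F\<in>set Fs. \<forall>xs. length xs = k \<longrightarrow> eval X (prog F) xs (F xs)"
    using bchoice[OF Fs[unfolded comp_fun_n_def]] by blast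
  obtain q where q: "\<forall>ys. length ys = length Fs \<longrightarrow> eval X q ys (G ys)"
    using G unfolding comp_fun_n_def by blast
  have "eval X (Comp q (map prog Fs)) xs (G (map (\<lambda>F. F xs) Fs))" if "length xs = k" for xs
    using prog q that
    by (intro eval_comp[where ys="map (\<lambda>F. F xs) Fs"]) (auto simp: list_all2_conv_all_nth)
  then show ?thesis
    unfolding comp_fun_n_def by blast
qed

lemma comp_fun_n_comp1:
  assumes "comp_fun_n X 1 (\<lambda>xs. g (xs ! 0))" and "comp_fun_n X k A"
  shows "comp_fun_n X k (\<lambda>xs. g (A xs))"
  using comp_fun_n_Comp[of X "[A]" "\<lambda>xs. g (xs ! 0)" k] assms by simp

lemma comp_fun_n_comp2:
  assumes "comp_fun_n X 2 (\<lambda>xs. g (xs ! 0) (xs ! 1))" and "comp_fun_n X k A" "comp_fun_n X k B"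
  shows "comp_fun_n X k (\<lambda>xs. g (A xs) (B xs))"
  using comp_fun_n_Comp[of X "[A, B]" "\<lambda>xs. g (xs ! 0) (xs ! 1)" k] assms
  by (simp add: numeral_2_eq_2)

primrec prim_rec :: "(nat list \<Rightarrow> nat) \<Rightarrow> (nat list \<Rightarrow> nat) \<Rightarrow> nat \<Rightarrow> nat list \<Rightarrow> nat" where
  "prim_rec F G 0 ys = F ys"
| "prim_rec F G (Suc n) ys = G (prim_rec F G n ys # n # ys)"

lemma comp_fun_n_Prim:
  assumes "comp_fun_n X k F" and "comp_fun_n X (Suc (Suc k)) G"
  shows "comp_fun_n X (Suc k) (\<lambda>xs. prim_rec F G (hd xs) (tl xs))"
proof -
  obtain p where p: "\<forall>ys. length ys = k \<longrightarrow> eval X p ys (F ys)"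
    using assms(1) unfolding comp_fun_n_def by blast
  obtain q where q: "\<forall>ys. length ys = Suc (Suc k) \<longrightarrow> eval X q ys (G ys)"
    using assms(2) unfolding comp_fun_n_def by blast
  have prim: "eval X (Prim p q) (n # ys) (prim_rec F G n ys)" if "length ys = k" for n ys
  proof (induction n)
    case 0
    then show ?case using p that by (auto intro: eval_prim0)
  next
    case (Suc n)
    then show ?case using q that by (auto intro: eval_primS)
  qed
  have "eval X (Prim p q) xs (prim_rec F G (hd xs) (tl xs))" if "length xs = Suc k" for xs
    using prim[of "tl xs" "hd xs"] that by (cases xs) auto
  then show ?thesis
    unfolding comp_fun_n_def by blast
qed

lemma comp_fun_n_Mu:
  assumes F: "comp_fun_n X (Suc k) F" and total: "\<And>xs. length xs = k \<Longrightarrow> \<exists>n. F (n # xs) = 0"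
  shows "comp_fun_n X k (\<lambda>xs. LEAST n. F (n # xs) = 0)"
proof -
  obtain p where p: "\<forall>ys. length ys = Suc k \<longrightarrow> eval X p ys (F ys)"
    using F unfolding comp_fun_n_def by blast
  have "eval X (Mu p) xs (LEAST n. F (n # xs) = 0)" if xs: "length xs = k" for xs
  proof (rule eval_mu)
    show "eval X p ((LEAST n. F (n # xs) = 0) # xs) 0"
      using p xs LeastI_ex[OF total[OF xs]] by (metis length_Cons)
    show "\<forall>m<(LEAST n. F (n # xs) = 0). \<exists>y. eval X p (m # xs) (Suc y)"
      using p xs not_less_Least not0_implies_Suc by (metis length_Cons)
  qed
  then show ?thesis
    unfolding comp_fun_n_def by blast
qed

lemma comp_fun_n_Suc: "comp_fun_n X k A \<Longrightarrow> comp_fun_n X k (\<lambda>xs. Suc (A xs))"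
  by (rule comp_fun_n_comp1[OF comp_fun_n_Succ])

lemma comp_fun_n_const: "comp_fun_n X k (\<lambda>xs. c)"
  by (induction c) (auto intro: comp_fun_n_Zero comp_fun_n_Suc)

lemma comp_fun_n_Cons_arg:
  assumes "comp_fun_n X (Suc k) H" and "comp_fun_n X k B"
  shows "comp_fun_n X k (\<lambda>xs. H (B xs # xs))"
proof -
  have "comp_fun_n X k (\<lambda>xs. H (map (\<lambda>F. F xs) (B # map (\<lambda>i xs. xs ! i) [0..<k])))"
    using assms by (intro comp_fun_n_Comp) (auto intro: comp_fun_n_Proj)
  then show ?thesis
    by (rule comp_fun_n_cong) (simp add: comp_def, metis map_nth)
qed

lemma comp_fun_n_tl_arg:
  assumes "comp_fun_n X k H"
  shows "comp_fun_n X (Suc k) (\<lambda>xs. H (tl xs))"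
proof -
  have "comp_fun_n X (Suc k) (\<lambda>xs. H (map (\<lambda>F. F xs) (map (\<lambda>i xs. xs ! Suc i) [0..<k])))"
    using assms by (intro comp_fun_n_Comp) (auto intro: comp_fun_n_Proj)
  then show ?thesis
    by (rule comp_fun_n_cong) (auto simp: comp_def map_nth length_Suc_conv)
qed

lemma comp_fun_n_prim_rec1:
  assumes "comp_fun_n X 0 F" and "comp_fun_n X 2 G" and "\<And>a. prim_rec F G a [] = h a"
  shows "comp_fun_n X 1 (\<lambda>xs. h (xs ! 0))"
proof -
  have "comp_fun_n X 1 (\<lambda>xs. prim_rec F G (hd xs) (tl xs))"
    using assms(1,2) comp_fun_n_Prim[of X 0 F G] by (simp add: numeral_2_eq_2)
  then show ?thesis
  proof (rule comp_fun_n_cong)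
    fix xs :: "nat list" assume "length xs = 1"
    then obtain a where "xs = [a]" by (auto simp: length_Suc_conv)
    then show "prim_rec F G (hd xs) (tl xs) = h (xs ! 0)" by (simp add: assms(3))
  qed
qed

lemma comp_fun_n_prim_rec2:
  assumes "comp_fun_n X 1 F" and "comp_fun_n X 3 G" and "\<And>a b. prim_rec F G a [b] = h a b"
  shows "comp_fun_n X 2 (\<lambda>xs. h (xs ! 0) (xs ! 1))"
proof -
  have "comp_fun_n X 2 (\<lambda>xs. prim_rec F G (hd xs) (tl xs))"
    using assms(1,2) comp_fun_n_Prim[of X 1 F G] by (simp add: numeral_2_eq_2 numeral_3_eq_3)
  then show ?thesis
  proof (rule comp_fun_n_cong)
    fix xs :: "nat list" assume "length xs = 2"
    then obtain a b where "xs = [a, b]" by (auto simp: length_Suc_conv numeral_2_eq_2)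
    then show "prim_rec F G (hd xs) (tl xs) = h (xs ! 0) (xs ! 1)" by (simp add: assms(3))
  qed
qed

lemma comp_fun_n_add:
  assumes "comp_fun_n X k A" and "comp_fun_n X k B"
  shows "comp_fun_n X k (\<lambda>xs. A xs + B xs)"
proof -
  have rec: "prim_rec (\<lambda>ys. ys ! 0) (\<lambda>zs. Suc (zs ! 0)) a [b] = a + b" for a b
    by (induction a) auto
  have "comp_fun_n X 2 (\<lambda>xs. xs ! 0 + xs ! 1)"
    by (rule comp_fun_n_prim_rec2[OF _ _ rec])
       (intro comp_fun_n_Suc comp_fun_n_Proj; simp)+
  then show ?thesis
    using assms by (rule comp_fun_n_comp2)
qed

lemma comp_fun_n_diff:
  assumes "comp_fun_n X k A" and "comp_fun_n X k B"
  shows "comp_fun_n X k (\<lambda>xs. A xs - B xs)"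
proof -
  have pred_rec: "prim_rec (\<lambda>ys. 0) (\<lambda>zs. zs ! 1) a [] = a - 1" for a
    by (cases a) auto
  have pred: "comp_fun_n X 1 (\<lambda>xs. xs ! 0 - 1)"
    by (rule comp_fun_n_prim_rec1[OF _ _ pred_rec])
       (intro comp_fun_n_Zero comp_fun_n_Proj; simp)+
  have rec: "prim_rec (\<lambda>ys. ys ! 0) (\<lambda>zs. zs ! 0 - 1) a [b] = b - a" for a b
    by (induction a) auto
  have "comp_fun_n X 2 (\<lambda>xs. xs ! 1 - xs ! 0)"
    by (rule comp_fun_n_prim_rec2[OF _ _ rec])
       (intro comp_fun_n_comp1[OF pred] comp_fun_n_Proj; simp)+
  then show ?thesis
    using comp_fun_n_comp2[where g="\<lambda>a b. b - a"] assms by blast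
qed

lemma comp_fun_n_mult:
  assumes "comp_fun_n X k A" and "comp_fun_n X k B"
  shows "comp_fun_n X k (\<lambda>xs. A xs * B xs)"
proof -
  have rec: "prim_rec (\<lambda>ys. 0) (\<lambda>zs. zs ! 0 + zs ! 2) a [b] = a * b" for a b
    by (induction a) auto
  have "comp_fun_n X 2 (\<lambda>xs. xs ! 0 * xs ! 1)"
    by (rule comp_fun_n_prim_rec2[OF _ _ rec])
       (intro comp_fun_n_add comp_fun_n_Zero comp_fun_n_Proj; simp)+
  then show ?thesis
    using assms by (rule comp_fun_n_comp2)
qed

lemma comp_fun_n_triangle:
  assumes "comp_fun_n X k A"
  shows "comp_fun_n X k (\<lambda>xs. triangle (A xs))"
proof -
  have rec: "prim_rec (\<lambda>ys. 0) (\<lambda>zs. zs ! 0 + Suc (zs ! 1)) a [] = triangle a" for a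
    by (induction a) auto
  have "comp_fun_n X 1 (\<lambda>xs. triangle (xs ! 0))"
    by (rule comp_fun_n_prim_rec1[OF _ _ rec])
       (intro comp_fun_n_add comp_fun_n_Suc comp_fun_n_Zero comp_fun_n_Proj; simp)+
  then show ?thesis
    using assms by (rule comp_fun_n_comp1)
qed

lemma comp_fun_n_prod_encode:
  assumes "comp_fun_n X k A" and "comp_fun_n X k B"
  shows "comp_fun_n X k (\<lambda>xs. prod_encode (A xs, B xs))"
  using comp_fun_n_add[OF comp_fun_n_triangle[OF comp_fun_n_add[OF assms]] assms(1)]
  by (simp add: prod_encode_def)

lemma comp_pred_n_const: "comp_pred_n X k (\<lambda>xs. b)"
  unfolding comp_pred_n_def by (rule comp_fun_n_const)

lemma comp_pred_n_eq:
  assumes "comp_fun_n X k A" and "comp_fun_n X k B"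
  shows "comp_pred_n X k (\<lambda>xs. A xs = B xs)"
  unfolding comp_pred_n_def
  using comp_fun_n_diff[OF comp_fun_n_const
      comp_fun_n_add[OF comp_fun_n_diff[OF assms] comp_fun_n_diff[OF assms(2,1)]], of 1]
  by (rule comp_fun_n_cong) auto

lemma comp_pred_n_less:
  assumes "comp_fun_n X k A" and "comp_fun_n X k B"
  shows "comp_pred_n X k (\<lambda>xs. A xs < B xs)"
  unfolding comp_pred_n_def
  using comp_fun_n_diff[OF comp_fun_n_const
      comp_fun_n_diff[OF comp_fun_n_const comp_fun_n_diff[OF assms(2,1)]], of 1 1]
  by (rule comp_fun_n_cong) auto

lemma comp_pred_n_not:
  assumes "comp_pred_n X k P"
  shows "comp_pred_n X k (\<lambda>xs. \<not> P xs)"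
  using comp_fun_n_diff[OF comp_fun_n_const assms[unfolded comp_pred_n_def], of 1]
  unfolding comp_pred_n_def by (rule comp_fun_n_cong) auto

lemma comp_pred_n_conj:
  assumes "comp_pred_n X k P" and "comp_pred_n X k Q"
  shows "comp_pred_n X k (\<lambda>xs. P xs \<and> Q xs)"
  using comp_fun_n_mult[OF assms[unfolded comp_pred_n_def]]
  unfolding comp_pred_n_def by (rule comp_fun_n_cong) auto

lemma comp_pred_n_disj:
  assumes "comp_pred_n X k P" and "comp_pred_n X k Q"
  shows "comp_pred_n X k (\<lambda>xs. P xs \<or> Q xs)"
  using comp_pred_n_not[OF comp_pred_n_conj[OF assms[THEN comp_pred_n_not]]] by simp

lemma comp_fun_n_If:
  assumes "comp_pred_n X k P" and "comp_fun_n X k A" and "comp_fun_n X k B"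
  shows "comp_fun_n X k (\<lambda>xs. if P xs then A xs else B xs)"
proof -
  let ?p = "\<lambda>xs. if P xs then 1 else 0"
  have "comp_fun_n X k (\<lambda>xs. ?p xs * A xs + (1 - ?p xs) * B xs)"
    using assms unfolding comp_pred_n_def
    by (intro comp_fun_n_add comp_fun_n_mult comp_fun_n_diff comp_fun_n_const)
  then show ?thesis
    by (rule comp_fun_n_cong) simp
qed

lemma comp_pred_n_If:
  assumes "comp_pred_n X k P" and "comp_pred_n X k Q" and "comp_pred_n X k R"
  shows "comp_pred_n X k (\<lambda>xs. if P xs then Q xs else R xs)"
  using comp_fun_n_If[OF assms(1) assms(2,3)[unfolded comp_pred_n_def]]
  unfolding comp_pred_n_def by (rule comp_fun_n_cong) simp

lemma comp_pred_n_All_less: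
  assumes P: "comp_pred_n X (Suc k) P" and B: "comp_fun_n X k B"
  shows "comp_pred_n X k (\<lambda>xs. \<forall>i<B xs. P (i # xs))"
proof -
  define step where "step zs = zs ! 0 * (if P (tl zs) then 1 else 0)" for zs
  have all: "prim_rec (\<lambda>ys. 1) step m ys = (if \<forall>i<m. P (i # ys) then 1 else 0)" for m ys
    by (induction m) (auto simp: step_def less_Suc_eq)
  have "comp_fun_n X (Suc (Suc k)) step"
    unfolding step_def using P[unfolded comp_pred_n_def]
    by (intro comp_fun_n_mult comp_fun_n_Proj comp_fun_n_tl_arg) auto
  then have "comp_fun_n X (Suc k) (\<lambda>xs. prim_rec (\<lambda>ys. 1) step (hd xs) (tl xs))"
    by (intro comp_fun_n_Prim comp_fun_n_const)
  from comp_fun_n_Cons_arg[OF this B] show ?thesis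
    unfolding comp_pred_n_def all by simp
qed

lemma comp_fun_iff_comp_fun_n: "comp_fun X f \<longleftrightarrow> comp_fun_n X 1 (\<lambda>xs. f (xs ! 0))"
  unfolding comp_fun_def comp_fun_n_def
  by (intro iffI; elim exE; rule_tac x=p in exI) (auto simp: length_Suc_conv)

lemma comp_set_iff_comp_pred_n: "comp_set X S \<longleftrightarrow> comp_pred_n X 1 (\<lambda>xs. xs ! 0 \<in> S)"
  unfolding comp_set_def comp_pred_n_def comp_fun_iff_comp_fun_n ..

lemma comp_fun_n_comp_fun: "comp_fun X f \<Longrightarrow> comp_fun_n X k A \<Longrightarrow> comp_fun_n X k (\<lambda>xs. f (A xs))"
  unfolding comp_fun_iff_comp_fun_n by (rule comp_fun_n_comp1)

lemma comp_pred_n_comp1: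
  "comp_pred_n X 1 (\<lambda>xs. Q (xs ! 0)) \<Longrightarrow> comp_fun_n X k A \<Longrightarrow> comp_pred_n X k (\<lambda>xs. Q (A xs))"
  unfolding comp_pred_n_def by (rule comp_fun_n_comp1[where g="\<lambda>a. if Q a then 1 else 0"])

lemma comp_pred_n_mem: "comp_set X S \<Longrightarrow> comp_fun_n X k A \<Longrightarrow> comp_pred_n X k (\<lambda>xs. A xs \<in> S)"
  unfolding comp_set_iff_comp_pred_n by (rule comp_pred_n_comp1)

section \<open>Pairing and list codes\<close>

definition triangle_root :: "nat \<Rightarrow> nat" where
  "triangle_root n = (LEAST s. n < triangle (Suc s))"

lemma less_triangle_Suc: "n < triangle (Suc n)"
  by (induction n) auto

lemma triangle_root_bounds:
  "triangle (triangle_root n) \<le> n" "n < triangle (Suc (triangle_root n))"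
proof -
  show "n < triangle (Suc (triangle_root n))"
    unfolding triangle_root_def by (rule LeastI[of _ n, OF less_triangle_Suc])
  show "triangle (triangle_root n) \<le> n"
  proof (cases "triangle_root n")
    case (Suc m)
    then have "\<not> n < triangle (Suc m)"
      unfolding triangle_root_def by (metis lessI not_less_Least)
    then show ?thesis using Suc by simp
  qed simp
qed

lemma prod_decode_triangle_root:
  "prod_decode n =
     (n - triangle (triangle_root n), triangle_root n - (n - triangle (triangle_root n)))"
proof -
  have "prod_encode
      (n - triangle (triangle_root n), triangle_root n - (n - triangle (triangle_root n))) = n"
    using triangle_root_bounds[of n] unfolding prod_encode_def by auto
  then show ?thesis
    by (metis prod_encode_inverse)
qed

lemma comp_fun_n_triangle_root:
  assumes "comp_fun_n X k A"
  shows "comp_fun_n X k (\<lambda>xs. triangle_root (A xs))"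
proof -
  let ?F = "\<lambda>ys. if ys ! 1 < triangle (Suc (ys ! 0)) then 0 else 1 :: nat"
  have F: "comp_fun_n X (Suc 1) ?F"
    by (intro comp_fun_n_If comp_pred_n_less comp_fun_n_triangle comp_fun_n_Suc comp_fun_n_Proj
        comp_fun_n_const) auto
  have "\<exists>s. ?F (s # xs) = 0" for xs
    using less_triangle_Suc[of "xs ! 0"] by (intro exI[of _ "xs ! 0"]) simp
  then have "comp_fun_n X 1 (\<lambda>xs. LEAST s. ?F (s # xs) = 0)"
    by (intro comp_fun_n_Mu[OF F])
  then have "comp_fun_n X 1 (\<lambda>xs. triangle_root (xs ! 0))"
    by (rule comp_fun_n_cong) (simp add: triangle_root_def)
  then show ?thesis
    using assms by (rule comp_fun_n_comp1)
qed

lemma comp_fun_n_fst_prod_decode: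
  "comp_fun_n X k A \<Longrightarrow> comp_fun_n X k (\<lambda>xs. fst (prod_decode (A xs)))"
  by (subst prod_decode_triangle_root)
    (simp add: comp_fun_n_diff comp_fun_n_triangle comp_fun_n_triangle_root)

lemma comp_fun_n_snd_prod_decode:
  "comp_fun_n X k A \<Longrightarrow> comp_fun_n X k (\<lambda>xs. snd (prod_decode (A xs)))"
  by (subst prod_decode_triangle_root)
    (simp add: comp_fun_n_diff comp_fun_n_triangle comp_fun_n_triangle_root)

lemma prod_decode_0: "prod_decode 0 = (0, 0)"
  using prod_encode_inverse[of "(0, 0)"] by (simp add: prod_encode_def)

text \<open>Codes of lists satisfy \<open>list_encode (x # xs) = Suc (prod_encode (x, list_encode xs))\<close>.\<close>

definition hd_code :: "nat \<Rightarrow> nat" where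
  "hd_code n = fst (prod_decode (n - 1))"

definition tl_code :: "nat \<Rightarrow> nat" where
  "tl_code n = snd (prod_decode (n - 1))"

definition drop_code :: "nat \<Rightarrow> nat \<Rightarrow> nat" where
  "drop_code j n = (tl_code ^^ j) n"

definition nth_code :: "nat \<Rightarrow> nat \<Rightarrow> nat" where
  "nth_code j n = hd_code (drop_code j n)"

definition length_code :: "nat \<Rightarrow> nat" where
  "length_code n = (LEAST j. drop_code j n = 0)"

lemma hd_code_Suc_prod_encode [simp]: "hd_code (Suc (prod_encode (x, n))) = x"
  by (simp add: hd_code_def)

lemma tl_code_Suc_prod_encode [simp]: "tl_code (Suc (prod_encode (x, n))) = n"
  by (simp add: tl_code_def)

lemma hd_code_0: "hd_code 0 = 0"
  by (simp add: hd_code_def prod_decode_0)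

lemma tl_code_list_encode: "tl_code (list_encode xs) = list_encode (tl xs)"
  by (cases xs) (auto simp: tl_code_def prod_decode_0)

lemma hd_code_list_encode: "xs \<noteq> [] \<Longrightarrow> hd_code (list_encode xs) = hd xs"
  by (cases xs) auto

lemma drop_code_list_encode: "drop_code j (list_encode xs) = list_encode (drop j xs)"
  unfolding drop_code_def by (induction j) (auto simp: tl_code_list_encode drop_Suc tl_drop)

lemma nth_code_list_encode: "j < length xs \<Longrightarrow> nth_code j (list_encode xs) = xs ! j"
  unfolding nth_code_def drop_code_list_encode by (simp add: hd_code_list_encode hd_drop_conv_nth)

lemma list_encode_eq_0: "list_encode xs = 0 \<longleftrightarrow> xs = []"
  by (cases xs) auto

lemma length_code_list_encode: "length_code (list_encode xs) = length xs"
  unfolding length_code_def drop_code_list_encode list_encode_eq_0 by (rule Least_equality) auto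

lemma comp_fun_n_hd_code: "comp_fun_n X k A \<Longrightarrow> comp_fun_n X k (\<lambda>xs. hd_code (A xs))"
  unfolding hd_code_def by (intro comp_fun_n_fst_prod_decode comp_fun_n_diff comp_fun_n_const)

lemma comp_fun_n_tl_code: "comp_fun_n X k A \<Longrightarrow> comp_fun_n X k (\<lambda>xs. tl_code (A xs))"
  unfolding tl_code_def by (intro comp_fun_n_snd_prod_decode comp_fun_n_diff comp_fun_n_const)

lemma comp_fun_n_drop_code:
  assumes "comp_fun_n X k A" and "comp_fun_n X k B"
  shows "comp_fun_n X k (\<lambda>xs. drop_code (A xs) (B xs))"
proof -
  have rec: "prim_rec (\<lambda>ys. ys ! 0) (\<lambda>zs. tl_code (zs ! 0)) a [b] = drop_code a b" for a b
    by (induction a) (auto simp: drop_code_def)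
  have "comp_fun_n X 2 (\<lambda>xs. drop_code (xs ! 0) (xs ! 1))"
    by (rule comp_fun_n_prim_rec2[OF _ _ rec]) (intro comp_fun_n_tl_code comp_fun_n_Proj; simp)+
  then show ?thesis
    using assms by (rule comp_fun_n_comp2)
qed

lemma comp_fun_n_nth_code:
  "comp_fun_n X k A \<Longrightarrow> comp_fun_n X k B \<Longrightarrow> comp_fun_n X k (\<lambda>xs. nth_code (A xs) (B xs))"
  unfolding nth_code_def by (intro comp_fun_n_hd_code comp_fun_n_drop_code)

lemma comp_fun_n_length_code:
  assumes "comp_fun_n X k A"
  shows "comp_fun_n X k (\<lambda>xs. length_code (A xs))"
proof -
  have "comp_fun_n X (Suc 1) (\<lambda>ys. drop_code (ys ! 0) (ys ! 1))"
    by (intro comp_fun_n_drop_code comp_fun_n_Proj) auto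
  moreover have "\<exists>j. drop_code j n = 0" for n
    using drop_code_list_encode[of "length (list_decode n)" "list_decode n"] by auto
  ultimately have "comp_fun_n X 1 (\<lambda>xs. LEAST j. drop_code ((j # xs) ! 0) ((j # xs) ! 1) = 0)"
    by (intro comp_fun_n_Mu) auto
  then have "comp_fun_n X 1 (\<lambda>xs. length_code (xs ! 0))"
    by (rule comp_fun_n_cong) (simp add: length_code_def)
  then show ?thesis
    unfolding length_code_def using assms by (rule comp_fun_n_comp1)
qed

text \<open>\<open>map_code h\<close> conses the images of the elements from the last one backwards.\<close>

definition map_code_step :: "(nat \<Rightarrow> nat) \<Rightarrow> nat list \<Rightarrow> nat" where
  "map_code_step h zs =
     Suc (prod_encode (h (nth_code (length_code (zs ! 2) - Suc (zs ! 1)) (zs ! 2)), zs ! 0))"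

definition map_code :: "(nat \<Rightarrow> nat) \<Rightarrow> nat \<Rightarrow> nat" where
  "map_code h n = prim_rec (\<lambda>ys. 0) (map_code_step h) (length_code n) [n]"

lemma map_code_step_correct:
  "j \<le> length xs \<Longrightarrow> prim_rec (\<lambda>ys. 0) (map_code_step h) j [list_encode xs]
     = list_encode (map h (drop (length xs - j) xs))"
proof (induction j)
  case (Suc j)
  then have "length xs - Suc j < length xs" by auto
  moreover have "drop (length xs - Suc j) xs = xs ! (length xs - Suc j) # drop (length xs - j) xs"
    using Cons_nth_drop_Suc[OF \<open>length xs - Suc j < length xs\<close>] Suc.prems
    by (metis Suc_diff_Suc Suc_le_lessD)
  ultimately show ?case
    using Suc by (simp add: map_code_step_def length_code_list_encode nth_code_list_encode)
qed simp

lemma map_code_list_encode: "map_code h (list_encode xs) = list_encode (map h xs)"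
  unfolding map_code_def length_code_list_encode
  using map_code_step_correct[of "length xs" xs h] by simp

lemma comp_fun_n_map_code:
  assumes h: "comp_fun X h" and A: "comp_fun_n X k A"
  shows "comp_fun_n X k (\<lambda>xs. map_code h (A xs))"
proof -
  have "comp_fun_n X (Suc (Suc 1)) (map_code_step h)"
    unfolding map_code_step_def
    by (intro comp_fun_n_Suc comp_fun_n_prod_encode comp_fun_n_comp_fun[OF h] comp_fun_n_nth_code
        comp_fun_n_diff comp_fun_n_length_code comp_fun_n_Proj) auto
  then have "comp_fun_n X 2 (\<lambda>xs. prim_rec (\<lambda>ys. 0) (map_code_step h) (hd xs) (tl xs))"
    using comp_fun_n_Prim[OF comp_fun_n_Zero] by (simp add: numeral_2_eq_2)
  then have "comp_fun_n X 2 (\<lambda>xs. prim_rec (\<lambda>ys. 0) (map_code_step h) (xs ! 0) [xs ! 1])"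
    by (rule comp_fun_n_cong) (auto simp: numeral_2_eq_2 length_Suc_conv)
  from comp_fun_n_comp2[OF this comp_fun_n_length_code[OF A] A]
  show ?thesis unfolding map_code_def .
qed

section \<open>Sums of a structure and infinitely many copies of another\<close>

definition tagged :: "nat \<Rightarrow> nat \<Rightarrow> nat" where
  "tagged c x = prod_encode (c, x)"

definition tag :: "nat \<Rightarrow> nat" where
  "tag u = fst (prod_decode u)"

definition elt :: "nat \<Rightarrow> nat" where
  "elt u = snd (prod_decode u)"

lemma tag_tagged [simp]: "tag (tagged c x) = c"
  by (simp add: tag_def tagged_def)

lemma elt_tagged [simp]: "elt (tagged c x) = x"
  by (simp add: elt_def tagged_def)

lemma tagged_tag_elt [simp]: "tagged (tag u) (elt u) = u"
  by (simp add: tag_def elt_def tagged_def)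

lemma tagged_eq_iff [simp]: "tagged c x = tagged d y \<longleftrightarrow> c = d \<and> x = y"
  by (simp add: tagged_def)

lemma map_elt_map_tagged [simp]: "map elt (map (tagged c) xs) = xs"
  by (induction xs) auto

lemma comp_fun_n_tag: "comp_fun_n X k A \<Longrightarrow> comp_fun_n X k (\<lambda>xs. tag (A xs))"
  unfolding tag_def by (rule comp_fun_n_fst_prod_decode)

lemma comp_fun_n_elt: "comp_fun_n X k A \<Longrightarrow> comp_fun_n X k (\<lambda>xs. elt (A xs))"
  unfolding elt_def by (rule comp_fun_n_snd_prod_decode)

lemma comp_fun_n_tagged:
  "comp_fun_n X k A \<Longrightarrow> comp_fun_n X k B \<Longrightarrow> comp_fun_n X k (\<lambda>xs. tagged (A xs) (B xs))"
  unfolding tagged_def by (rule comp_fun_n_prod_encode)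

definition summand :: "struc \<Rightarrow> struc \<Rightarrow> nat \<Rightarrow> struc" where
  "summand S T c = (if c = 0 then S else T)"

lemma summand_0 [simp]: "summand S T 0 = S"
  by (simp add: summand_def)

lemma summand_same [simp]: "summand S S c = S"
  by (simp add: summand_def)

definition list_tag :: "nat list \<Rightarrow> nat" where
  "list_tag as = (case as of [] \<Rightarrow> 0 | a # _ \<Rightarrow> tag a)"

definition same_tag :: "nat list \<Rightarrow> bool" where
  "same_tag as \<longleftrightarrow> (\<forall>a\<in>set as. tag a = list_tag as)"

lemma list_tag_Nil [simp]: "list_tag [] = 0"
  by (simp add: list_tag_def)

lemma same_tag_Nil [simp]: "same_tag []"
  by (simp add: same_tag_def)

lemma list_tag_map_tagged [simp]: "list_tag (map (tagged c) xs) = (if xs = [] then 0 else c)"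
  by (cases xs) (auto simp: list_tag_def)

lemma same_tag_map_tagged [simp]: "same_tag (map (tagged c) xs)"
  by (cases xs) (auto simp: same_tag_def list_tag_def)

lemma same_tag_imp_map_tagged: "same_tag as \<Longrightarrow> as = map (tagged (list_tag as)) (map elt as)"
  unfolding same_tag_def map_map by (rule sym, rule map_idI) (metis comp_apply tagged_tag_elt)

definition rel_sym :: "nat \<Rightarrow> nat" where
  "rel_sym i = Suc (tagged 0 i)"

definition graph_sym :: "nat \<Rightarrow> nat" where
  "graph_sym i = Suc (tagged 1 i)"

definition sym_kind :: "nat \<Rightarrow> nat" where
  "sym_kind s = tag (s - 1)"

definition sym_index :: "nat \<Rightarrow> nat" where
  "sym_index s = elt (s - 1)"

lemma rel_sym_simps [simp]: "rel_sym i \<noteq> 0" "sym_kind (rel_sym i) = 0" "sym_index (rel_sym i) = i"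
  by (simp_all add: rel_sym_def sym_kind_def sym_index_def)

lemma graph_sym_simps [simp]:
  "graph_sym i \<noteq> 0" "sym_kind (graph_sym i) = 1" "sym_index (graph_sym i) = i"
  by (simp_all add: graph_sym_def sym_kind_def sym_index_def)

lemma comp_fun_n_sym_kind: "comp_fun_n X k A \<Longrightarrow> comp_fun_n X k (\<lambda>xs. sym_kind (A xs))"
  unfolding sym_kind_def by (intro comp_fun_n_tag comp_fun_n_diff comp_fun_n_const)

lemma comp_fun_n_sym_index: "comp_fun_n X k A \<Longrightarrow> comp_fun_n X k (\<lambda>xs. sym_index (A xs))"
  unfolding sym_index_def by (intro comp_fun_n_elt comp_fun_n_diff comp_fun_n_const)

text \<open>\<open>tagged_sum S T\<close> is the disjoint union of \<open>S\<close> (summand \<open>0\<close>) and of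
  infinitely many copies of \<open>T\<close> (summands \<open>1, 2, \<dots>\<close>), the element \<open>x\<close> of summand \<open>c\<close>
  being coded as \<open>tagged c x\<close>. Its language is relational: the symbol \<open>0\<close> relates the
  elements of the same summand, \<open>rel_sym i\<close> is the relation \<open>i\<close> and \<open>graph_sym i\<close> the
  graph (value first) of the function \<open>i\<close> within each summand.\<close>

definition tagged_sig :: "signature \<Rightarrow> signature" where
  "tagged_sig L =
     \<lparr>rels = insert 0 (rel_sym ` rels L \<union> graph_sym ` funs L),
      rar = (\<lambda>s. if s = 0 then 2 else if sym_kind s = 0 then rar L (sym_index s)
                 else Suc (far L (sym_index s))),
      funs = {}, far = (\<lambda>_. 0)\<rparr>"

definition tagged_sum :: "struc \<Rightarrow> struc \<Rightarrow> struc" where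
  "tagged_sum S T =
     \<lparr>univ = {u. elt u \<in> univ (summand S T (tag u))},
      rel = (\<lambda>s as. if s = 0 then length as = 2 \<and> tag (as ! 0) = tag (as ! 1)
        else same_tag as \<and>
          (if sym_kind s = 0 then rel (summand S T (list_tag as)) (sym_index s) (map elt as)
           else as \<noteq> [] \<and>
             fn (summand S T (list_tag as)) (sym_index s) (map elt (tl as)) = elt (hd as))),
      fn = (\<lambda>_ _. 0)\<rparr>"

lemma rels_tagged_sig:
  "s \<in> rels (tagged_sig L) \<longleftrightarrow> s = 0 \<or> (\<exists>i\<in>rels L. s = rel_sym i) \<or> (\<exists>i\<in>funs L. s = graph_sym i)"
  by (auto simp: tagged_sig_def)

lemma rels_tagged_sig_cases [consumes 1, case_names same_summand rel graph]:
  assumes "s \<in> rels (tagged_sig L)"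
  obtains "s = 0" | i where "i \<in> rels L" "s = rel_sym i" | i where "i \<in> funs L" "s = graph_sym i"
  using assms unfolding rels_tagged_sig by blast

lemma rar_tagged_sig [simp]:
  "rar (tagged_sig L) 0 = 2"
  "rar (tagged_sig L) (rel_sym i) = rar L i"
  "rar (tagged_sig L) (graph_sym i) = Suc (far L i)"
  by (simp_all add: tagged_sig_def)

lemma funs_tagged_sig [simp]: "funs (tagged_sig L) = {}"
  by (simp add: tagged_sig_def)

lemma mem_univ_tagged_sum: "u \<in> univ (tagged_sum S T) \<longleftrightarrow> elt u \<in> univ (summand S T (tag u))"
  by (simp add: tagged_sum_def)

lemma rel_tagged_sum_0: "rel (tagged_sum S T) 0 as \<longleftrightarrow> length as = 2 \<and> tag (as ! 0) = tag (as ! 1)"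
  by (simp add: tagged_sum_def)

lemma rel_tagged_sum_rel_sym:
  "rel (tagged_sum S T) (rel_sym i) as \<longleftrightarrow>
     same_tag as \<and> rel (summand S T (list_tag as)) i (map elt as)"
  by (simp add: tagged_sum_def)

lemma rel_tagged_sum_graph_sym:
  "rel (tagged_sum S T) (graph_sym i) (b # as) \<longleftrightarrow>
     same_tag (b # as) \<and> fn (summand S T (tag b)) i (map elt as) = elt b"
  by (simp add: tagged_sum_def list_tag_def)

lemma rel_tagged_sum_rel_sym_tagged:
  "rel (tagged_sum S T) (rel_sym i) (map (tagged c) xs) \<longleftrightarrow>
     rel (summand S T (if xs = [] then 0 else c)) i xs"
  by (simp add: rel_tagged_sum_rel_sym del: map_map)

lemma rel_tagged_sum_graph_sym_tagged:
  "rel (tagged_sum S T) (graph_sym i) (tagged c y # map (tagged c) ys) \<longleftrightarrow>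
     fn (summand S T c) i ys = y"
  using same_tag_map_tagged[of c "y # ys"] by (simp add: rel_tagged_sum_graph_sym del: map_map)

lemma wf_struc_summand: "wf_struc L S \<Longrightarrow> wf_struc L T \<Longrightarrow> wf_struc L (summand S T c)"
  by (simp add: summand_def)

lemma set_map_elt_subset_univ:
  "same_tag as \<Longrightarrow> set as \<subseteq> univ (tagged_sum S T) \<Longrightarrow>
     set (map elt as) \<subseteq> univ (summand S T (list_tag as))"
  by (auto simp: same_tag_def mem_univ_tagged_sum)

section \<open>Embeddings between sums\<close>

definition tagged_map :: "(nat \<Rightarrow> nat) \<Rightarrow> (nat \<Rightarrow> nat \<Rightarrow> nat) \<Rightarrow> nat \<Rightarrow> nat" where
  "tagged_map \<phi> g u = tagged (\<phi> (tag u)) (g (tag u) (elt u))"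

lemma tagged_map_tagged [simp]: "tagged_map \<phi> g (tagged c x) = tagged (\<phi> c) (g c x)"
  by (simp add: tagged_map_def)

lemma tag_tagged_map [simp]: "tag (tagged_map \<phi> g u) = \<phi> (tag u)"
  by (simp add: tagged_map_def)

lemma same_tag_map_tagged_map:
  assumes "inj \<phi>"
  shows "same_tag (map (tagged_map \<phi> g) as) \<longleftrightarrow> same_tag as"
  using assms by (cases as) (auto simp: same_tag_def list_tag_def inj_eq)

lemma is_emb_id: "is_emb L A A (\<lambda>x. x)"
  by (simp add: is_emb_def)

lemma is_emb_nullary_rel:
  "is_emb L A B f \<Longrightarrow> i \<in> rels L \<Longrightarrow> rar L i = 0 \<Longrightarrow> rel A i [] \<longleftrightarrow> rel B i []"
  unfolding is_emb_def by force

lemma comp_fun_tagged_map: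
  assumes "comp_fun X \<phi>" and "comp_fun_n X 2 (\<lambda>xs. g (xs ! 0) (xs ! 1))"
  shows "comp_fun X (tagged_map \<phi> g)"
  unfolding comp_fun_iff_comp_fun_n tagged_map_def
  by (intro comp_fun_n_tagged comp_fun_n_comp_fun[OF assms(1)] comp_fun_n_comp2[OF assms(2)]
      comp_fun_n_tag comp_fun_n_elt comp_fun_n_Proj) simp_all

context
  fixes L :: signature and S T S' T' :: struc and \<phi> :: "nat \<Rightarrow> nat" and g :: "nat \<Rightarrow> nat \<Rightarrow> nat"
  assumes inj_\<phi>: "inj \<phi>"
    and emb: "\<And>c. is_emb L (summand S T c) (summand S' T' (\<phi> c)) (g c)"
    and wf: "wf_struc L S" "wf_struc L T"
    \<comment> \<open>nullary relations of a sum are those of its summand \<open>0\<close>\<close>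
    and nullary: "\<And>i. i \<in> rels L \<Longrightarrow> rar L i = 0 \<Longrightarrow> rel S i [] \<longleftrightarrow> rel S' i []"
begin

lemma tagged_map_map_tagged:
  "map (tagged_map \<phi> g) (map (tagged c) xs) = map (tagged (\<phi> c)) (map (g c) xs)"
  by simp

lemma tagged_map_preserves_rel_sym:
  assumes i: "i \<in> rels L" and len: "length as = rar L i" and as: "set as \<subseteq> univ (tagged_sum S T)"
  shows "rel (tagged_sum S T) (rel_sym i) as \<longleftrightarrow>
    rel (tagged_sum S' T') (rel_sym i) (map (tagged_map \<phi> g) as)"
proof (cases "same_tag as")
  case False
  then show ?thesis
    by (simp add: rel_tagged_sum_rel_sym same_tag_map_tagged_map[OF inj_\<phi>])
next
  case True
  define c xs where "c = list_tag as" and "xs = map elt as"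
  have as_eq: "as = map (tagged c) xs"
    using True unfolding c_def xs_def by (rule same_tag_imp_map_tagged)
  have xs: "set xs \<subseteq> univ (summand S T c)"
    using set_map_elt_subset_univ[OF True as] unfolding c_def xs_def .
  show ?thesis
  proof (cases "xs = []")
    case True
    then show ?thesis
      using as_eq nullary[OF i] len by (simp add: rel_tagged_sum_rel_sym)
  next
    case False
    have "rel (summand S T c) i xs \<longleftrightarrow> rel (summand S' T' (\<phi> c)) i (map (g c) xs)"
      using emb[of c] i len xs as_eq by (simp add: is_emb_def)
    then show ?thesis
      unfolding as_eq tagged_map_map_tagged rel_tagged_sum_rel_sym_tagged using False by simp
  qed
qed

lemma tagged_map_preserves_graph_sym:
  assumes i: "i \<in> funs L" and len: "length as = Suc (far L i)"
    and as: "set as \<subseteq> univ (tagged_sum S T)"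
  shows "rel (tagged_sum S T) (graph_sym i) as \<longleftrightarrow>
    rel (tagged_sum S' T') (graph_sym i) (map (tagged_map \<phi> g) as)"
proof (cases "same_tag as")
  case False
  then show ?thesis
    using same_tag_map_tagged_map[OF inj_\<phi>, of g as] len
    by (cases as) (simp_all add: rel_tagged_sum_graph_sym)
next
  case True
  define c xs where "c = list_tag as" and "xs = map elt as"
  have as_eq: "as = map (tagged c) xs"
    using True unfolding c_def xs_def by (rule same_tag_imp_map_tagged)
  obtain y ys where xs_eq: "xs = y # ys"
    using len by (cases xs) (auto simp: xs_def)
  have y: "y \<in> univ (summand S T c)" and ys: "set ys \<subseteq> univ (summand S T c)"
    using set_map_elt_subset_univ[OF True as] xs_eq unfolding c_def xs_def by auto
  have ys_len: "length ys = far L i"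
    using arg_cong[OF xs_eq, of length] len by (simp add: xs_def)
  have "fn (summand S T c) i ys \<in> univ (summand S T c)"
    using wf_struc_summand[OF wf] i ys ys_len by (simp add: wf_struc_def)
  then have "fn (summand S T c) i ys = y \<longleftrightarrow> g c (fn (summand S T c) i ys) = g c y"
    using emb[of c] y unfolding is_emb_def by (metis inj_on_eq_iff)
  also have "\<dots> \<longleftrightarrow> fn (summand S' T' (\<phi> c)) i (map (g c) ys) = g c y"
    using emb[of c] i ys ys_len by (simp add: is_emb_def)
  finally show ?thesis
    unfolding as_eq xs_eq list.map tagged_map_tagged tagged_map_map_tagged
      rel_tagged_sum_graph_sym_tagged .
qed

lemma is_emb_tagged_map:
  "is_emb (tagged_sig L) (tagged_sum S T) (tagged_sum S' T') (tagged_map \<phi> g)"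
  unfolding is_emb_def
proof (intro conjI ballI allI impI)
  show "inj_on (tagged_map \<phi> g) (univ (tagged_sum S T))"
  proof (rule inj_onI)
    fix u v assume u: "u \<in> univ (tagged_sum S T)" and v: "v \<in> univ (tagged_sum S T)"
      and eq: "tagged_map \<phi> g u = tagged_map \<phi> g v"
    then have tags: "tag u = tag v"
      using inj_\<phi> by (simp add: tagged_map_def inj_eq)
    have "inj_on (g (tag u)) (univ (summand S T (tag u)))"
      using emb by (simp add: is_emb_def)
    then have "elt u = elt v"
      using eq tags u v by (simp add: tagged_map_def mem_univ_tagged_sum inj_on_eq_iff)
    with tags show "u = v"
      by (metis tagged_tag_elt)
  qed
  show "tagged_map \<phi> g ` univ (tagged_sum S T) \<subseteq> univ (tagged_sum S' T')"
  proof (rule image_subsetI)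
    fix u assume "u \<in> univ (tagged_sum S T)"
    then show "tagged_map \<phi> g u \<in> univ (tagged_sum S' T')"
      using emb[of "tag u"] by (auto simp: tagged_map_def mem_univ_tagged_sum is_emb_def)
  qed
  fix s as
  assume s: "s \<in> rels (tagged_sig L)"
    and "length as = rar (tagged_sig L) s \<and> set as \<subseteq> univ (tagged_sum S T)"
  then have len: "length as = rar (tagged_sig L) s" and as: "set as \<subseteq> univ (tagged_sum S T)"
    by simp_all
  from s show "rel (tagged_sum S T) s as \<longleftrightarrow> rel (tagged_sum S' T') s (map (tagged_map \<phi> g) as)"
  proof (cases rule: rels_tagged_sig_cases)
    case same_summand
    then show ?thesis
      using len inj_\<phi> by (simp add: rel_tagged_sum_0 inj_eq)
  next
    case (rel i)
    then show ?thesis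
      using len as by (simp add: tagged_map_preserves_rel_sym)
  next
    case (graph i)
    then show ?thesis
      using len as by (simp add: tagged_map_preserves_graph_sym)
  qed
qed simp

end

lemma biemb_X_tagged_sum:
  assumes wf: "wf_struc L A" "wf_struc L B" and "emb_X X L A B"
  shows "biemb_X X (tagged_sig L) (tagged_sum A B) (tagged_sum B B)"
proof -
  obtain f where f: "comp_fun X f" "is_emb L A B f"
    using assms(3) unfolding emb_X_def by blast
  let ?g = "\<lambda>c x. if c = 0 then f x else x"
  have "is_emb L (summand A B c) (summand B B (id c)) (?g c)" for c
    using f(2) is_emb_id by (simp add: summand_def)
  then have "is_emb (tagged_sig L) (tagged_sum A B) (tagged_sum B B) (tagged_map id ?g)"
    using wf is_emb_nullary_rel[OF f(2)] by (intro is_emb_tagged_map) simp_all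
  moreover have "comp_fun X (tagged_map id ?g)"
    by (intro comp_fun_tagged_map comp_fun_n_If comp_pred_n_eq comp_fun_n_comp_fun[OF f(1)]
        comp_fun_n_Proj comp_fun_n_const) (simp_all add: comp_fun_iff_comp_fun_n comp_fun_n_Proj)
  moreover have "is_emb (tagged_sig L) (tagged_sum B B) (tagged_sum A B) (tagged_map Suc (\<lambda>c x. x))"
    using wf is_emb_nullary_rel[OF f(2)] is_emb_id
    by (intro is_emb_tagged_map) (simp_all add: summand_def)
  moreover have "comp_fun X (tagged_map Suc (\<lambda>c x. x))"
    by (intro comp_fun_tagged_map comp_fun_n_Proj)
      (simp_all add: comp_fun_iff_comp_fun_n comp_fun_n_Suc comp_fun_n_Proj)
  ultimately show ?thesis
    unfolding biemb_X_def emb_X_def by blast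
qed

lemma is_emb_tagged_sum_same_summand:
  assumes G: "is_emb (tagged_sig L) (tagged_sum S T) (tagged_sum S' T') G"
    and u: "u \<in> univ (tagged_sum S T)" and v: "v \<in> univ (tagged_sum S T)" and "tag u = tag v"
  shows "tag (G u) = tag (G v)"
proof -
  have "rel (tagged_sum S T) 0 [u, v]"
    using \<open>tag u = tag v\<close> by (simp add: rel_tagged_sum_0)
  then have "rel (tagged_sum S' T') 0 [G u, G v]"
    using G u v unfolding is_emb_def by (auto simp: rels_tagged_sig)
  then show ?thesis
    by (simp add: rel_tagged_sum_0)
qed

lemma is_emb_from_tagged_sum:
  assumes G: "is_emb (tagged_sig L) (tagged_sum A B) (tagged_sum B B) G" and wf: "wf_struc L A"
  shows "is_emb L A B (\<lambda>x. elt (G (tagged 0 x)))"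
proof -
  define h where "h x = elt (G (tagged 0 x))" for x
  have preserves: "rel (tagged_sum A B) s as \<longleftrightarrow> rel (tagged_sum B B) s (map G as)"
    if "s \<in> rels (tagged_sig L)" "length as = rar (tagged_sig L) s" "set as \<subseteq> univ (tagged_sum A B)"
    for s as
    using G that by (simp add: is_emb_def)
  have tagged_univ: "tagged 0 x \<in> univ (tagged_sum A B)" if "x \<in> univ A" for x
    using that by (simp add: mem_univ_tagged_sum summand_def)
  obtain x\<^sub>0 where x\<^sub>0: "x\<^sub>0 \<in> univ A"
    using wf by (auto simp: wf_struc_def)
  define c where "c = tag (G (tagged 0 x\<^sub>0))"
  have G_tagged: "G (tagged 0 x) = tagged c (h x)" if "x \<in> univ A" for x
    using is_emb_tagged_sum_same_summand[OF G tagged_univ[OF that] tagged_univ[OF x\<^sub>0]]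
    unfolding c_def h_def by (metis tag_tagged tagged_tag_elt)
  then have G_map: "map G (map (tagged 0) xs) = map (tagged c) (map h xs)" if "set xs \<subseteq> univ A" for xs
    using that by auto
  have "inj_on h (univ A)"
    using G G_tagged tagged_univ by (auto simp: is_emb_def inj_on_def) (metis tagged_eq_iff)
  moreover have "h ` univ A \<subseteq> univ B"
    using G tagged_univ unfolding is_emb_def h_def by (force simp: mem_univ_tagged_sum)
  moreover have "rel A i xs \<longleftrightarrow> rel B i (map h xs)"
    if i: "i \<in> rels L" and xs: "length xs = rar L i" "set xs \<subseteq> univ A" for i xs
  proof -
    have "rel A i xs \<longleftrightarrow> rel (tagged_sum A B) (rel_sym i) (map (tagged 0) xs)"
      unfolding rel_tagged_sum_rel_sym_tagged by simp
    also have "\<dots> \<longleftrightarrow> rel (tagged_sum B B) (rel_sym i) (map (tagged c) (map h xs))"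
      using preserves[of "rel_sym i" "map (tagged 0) xs"] i xs tagged_univ
      by (auto simp: rels_tagged_sig G_map[OF xs(2)] simp del: map_map)
    also have "\<dots> \<longleftrightarrow> rel B i (map h xs)"
      unfolding rel_tagged_sum_rel_sym_tagged by simp
    finally show ?thesis .
  qed
  moreover have "h (fn A i xs) = fn B i (map h xs)"
    if i: "i \<in> funs L" and xs: "length xs = far L i" "set xs \<subseteq> univ A" for i xs
  proof -
    let ?y = "fn A i xs"
    have y: "?y \<in> univ A"
      using wf i xs by (simp add: wf_struc_def)
    have "rel (tagged_sum A B) (graph_sym i) (tagged 0 ?y # map (tagged 0) xs)"
      unfolding rel_tagged_sum_graph_sym_tagged by simp
    then have "rel (tagged_sum B B) (graph_sym i) (map G (tagged 0 ?y # map (tagged 0) xs))"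
      using preserves[of "graph_sym i" "tagged 0 ?y # map (tagged 0) xs"] i xs y tagged_univ
      by (auto simp: rels_tagged_sig simp del: map_map)
    then show ?thesis
      unfolding list.map G_tagged[OF y] G_map[OF xs(2)] rel_tagged_sum_graph_sym_tagged by simp
  qed
  ultimately show ?thesis
    unfolding is_emb_def h_def by blast
qed

lemma emb_X_from_tagged_sum:
  assumes "wf_struc L A" and "emb_X X (tagged_sig L) (tagged_sum A B) (tagged_sum B B)"
  shows "emb_X X L A B"
proof -
  obtain G where G: "comp_fun X G" "is_emb (tagged_sig L) (tagged_sum A B) (tagged_sum B B) G"
    using assms(2) unfolding emb_X_def by blast
  have "comp_fun X (\<lambda>x. elt (G (tagged 0 x)))"
    unfolding comp_fun_iff_comp_fun_n
    by (intro comp_fun_n_elt comp_fun_n_comp_fun[OF G(1)] comp_fun_n_tagged comp_fun_n_const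
        comp_fun_n_Proj) simp
  then show ?thesis
    using is_emb_from_tagged_sum[OF G(2) assms(1)] unfolding emb_X_def by blast
qed

section \<open>Computability of the sums\<close>

lemma rels_tagged_sig_iff:
  "s \<in> rels (tagged_sig L) \<longleftrightarrow> s = 0 \<or> s \<noteq> 0 \<and>
     (sym_kind s = 0 \<and> sym_index s \<in> rels L \<or> sym_kind s = 1 \<and> sym_index s \<in> funs L)"
proof (cases s)
  case (Suc m)
  then show ?thesis
    by (auto simp: tagged_sig_def rel_sym_def graph_sym_def sym_kind_def sym_index_def image_iff)
      (metis tagged_tag_elt)+
qed (simp add: tagged_sig_def)

lemma comp_sig_tagged_sig:
  assumes "comp_sig L"
  shows "comp_sig (tagged_sig L)"
proof -
  have L: "comp_set {} (rels L)" "comp_fun {} (rar L)" "comp_set {} (funs L)" "comp_fun {} (far L)"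
    using assms by (simp_all add: comp_sig_def)
  have "comp_pred_n {} 1 (\<lambda>xs. xs ! 0 = 0 \<or> xs ! 0 \<noteq> 0 \<and>
      (sym_kind (xs ! 0) = 0 \<and> sym_index (xs ! 0) \<in> rels L \<or>
       sym_kind (xs ! 0) = 1 \<and> sym_index (xs ! 0) \<in> funs L))"
    by (intro comp_pred_n_disj comp_pred_n_conj comp_pred_n_not comp_pred_n_eq comp_pred_n_mem L
        comp_fun_n_sym_kind comp_fun_n_sym_index comp_fun_n_Proj comp_fun_n_const) simp_all
  then have "comp_set {} (rels (tagged_sig L))"
    unfolding comp_set_iff_comp_pred_n by (rule comp_pred_n_cong) (simp add: rels_tagged_sig_iff)
  moreover have "comp_fun {} (rar (tagged_sig L))"
    unfolding comp_fun_iff_comp_fun_n tagged_sig_def signature.simps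
    by (intro comp_fun_n_If comp_pred_n_eq comp_fun_n_comp_fun[OF L(2)] comp_fun_n_comp_fun[OF L(4)]
        comp_fun_n_Suc comp_fun_n_sym_kind comp_fun_n_sym_index comp_fun_n_Proj comp_fun_n_const)
      simp_all
  moreover have "comp_set {} (funs (tagged_sig L))"
    unfolding comp_set_iff_comp_pred_n by (rule comp_pred_n_cong[OF comp_pred_n_const[of _ _ False]]) simp
  moreover have "comp_fun {} (far (tagged_sig L))"
    unfolding comp_fun_iff_comp_fun_n tagged_sig_def signature.simps by (rule comp_fun_n_const)
  ultimately show ?thesis
    by (simp add: comp_sig_def)
qed

lemma comp_set_univ_tagged_sum:
  assumes "comp_set X (univ S)" and "comp_set X (univ T)"
  shows "comp_set X (univ (tagged_sum S T))"
proof -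
  have "comp_pred_n X 1 (\<lambda>xs. if tag (xs ! 0) = 0 then elt (xs ! 0) \<in> univ S else elt (xs ! 0) \<in> univ T)"
    by (intro comp_pred_n_If comp_pred_n_eq comp_pred_n_mem assms comp_fun_n_tag comp_fun_n_elt
        comp_fun_n_Proj comp_fun_n_const) simp_all
  then show ?thesis
    unfolding comp_set_iff_comp_pred_n
    by (rule comp_pred_n_cong) (simp add: mem_univ_tagged_sum summand_def)
qed

lemma Suc_prod_encode_mem_rel_diag:
  "Suc (prod_encode (s, list_encode as)) \<in> rel_diag L M \<longleftrightarrow>
     s \<in> rels L \<and> length as = rar L s \<and> set as \<subseteq> univ M \<and> rel M s as"
  unfolding rel_diag_def by (auto simp flip: list_encode.simps simp: list_encode_eq)

lemma zero_not_mem_rel_diag: "0 \<notin> rel_diag L M"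
  by (auto simp: rel_diag_def)

lemma fun_table_Suc_prod_encode:
  "fun_table L M (Suc (prod_encode (i, list_encode as))) =
     (if i \<in> funs L \<and> length as = far L i \<and> set as \<subseteq> univ M then fn M i as else 0)"
  unfolding fun_table_def by (simp flip: list_encode.simps)

lemma mem_rel_diag_summand:
  "x \<in> rel_diag L (summand S T c) \<longleftrightarrow> (if c = 0 then x \<in> rel_diag L S else x \<in> rel_diag L T)"
  by (simp add: summand_def)

lemma fun_table_summand:
  "fun_table L (summand S T c) x = (if c = 0 then fun_table L S x else fun_table L T x)"
  by (simp add: summand_def)

lemma tag_hd_code_list_encode: "tag (hd_code (list_encode as)) = list_tag as"
  by (cases as) (simp_all add: hd_code_0 tag_def prod_decode_0 list_tag_def)

lemma same_tag_iff_code: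
  "same_tag as \<longleftrightarrow>
     (\<forall>j<length_code (list_encode as). tag (nth_code j (list_encode as)) = tag (hd_code (list_encode as)))"
  unfolding same_tag_def length_code_list_encode tag_hd_code_list_encode
  using nth_mem by (fastforce simp: nth_code_list_encode in_set_conv_nth)

text \<open>Decides \<open>rel (tagged_sum S T) s as\<close> from \<open>s\<close> and \<open>list_encode as\<close>, using only the
  atomic diagrams and function tables of \<open>S\<close> and \<open>T\<close>.\<close>

definition tagged_atom_test :: "signature \<Rightarrow> struc \<Rightarrow> struc \<Rightarrow> nat \<Rightarrow> nat \<Rightarrow> bool" where
  "tagged_atom_test L S T s t \<longleftrightarrow>
     (if s = 0 then tag (nth_code 0 t) = tag (nth_code 1 t)
      else (\<forall>j<length_code t. tag (nth_code j t) = tag (hd_code t)) \<and>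
        (if sym_kind s = 0
         then Suc (prod_encode (sym_index s, map_code elt t)) \<in> rel_diag L (summand S T (tag (hd_code t)))
         else fun_table L (summand S T (tag (hd_code t)))
                (Suc (prod_encode (sym_index s, tl_code (map_code elt t)))) = elt (hd_code t)))"

lemma tagged_atom_test_correct:
  assumes s: "s \<in> rels (tagged_sig L)" and len: "length as = rar (tagged_sig L) s"
    and as: "set as \<subseteq> univ (tagged_sum S T)"
  shows "tagged_atom_test L S T s (list_encode as) \<longleftrightarrow> rel (tagged_sum S T) s as"
  using s
proof (cases rule: rels_tagged_sig_cases)
  case same_summand
  then obtain a b where "as = [a, b]"
    using len by (auto simp: numeral_2_eq_2 length_Suc_conv)
  then show ?thesis
    using same_summand by (simp add: tagged_atom_test_def rel_tagged_sum_0 nth_code_list_encode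
        del: list_encode.simps)
next
  case (rel i)
  have "same_tag as \<Longrightarrow> rel (summand S T (list_tag as)) i (map elt as) \<longleftrightarrow>
      Suc (prod_encode (i, list_encode (map elt as))) \<in> rel_diag L (summand S T (list_tag as))"
    using rel len set_map_elt_subset_univ[OF _ as] by (simp add: Suc_prod_encode_mem_rel_diag)
  then show ?thesis
    unfolding rel(2) tagged_atom_test_def same_tag_iff_code[symmetric]
    by (auto simp: tag_hd_code_list_encode map_code_list_encode rel_tagged_sum_rel_sym)
next
  case (graph i)
  then obtain b bs where as_eq: "as = b # bs"
    using len by (cases as) auto
  have "same_tag as \<Longrightarrow> fn (summand S T (tag b)) i (map elt bs) =
      fun_table L (summand S T (tag b)) (Suc (prod_encode (i, list_encode (map elt bs))))"
    using graph len set_map_elt_subset_univ[OF _ as] as_eq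
    by (simp add: fun_table_Suc_prod_encode list_tag_def)
  then show ?thesis
    unfolding graph(2) tagged_atom_test_def same_tag_iff_code[symmetric] as_eq
    by (auto simp: map_code_list_encode tl_code_list_encode hd_code_list_encode
        rel_tagged_sum_graph_sym simp del: list_encode.simps)
qed

lemma mem_rel_diag_iff_code:
  "n \<in> rel_diag L M \<longleftrightarrow> n \<noteq> 0 \<and> hd_code n \<in> rels L \<and>
     length (list_decode (tl_code n)) = rar L (hd_code n) \<and>
     set (list_decode (tl_code n)) \<subseteq> univ M \<and> rel M (hd_code n) (list_decode (tl_code n))"
proof (cases n)
  case (Suc m)
  then have "n = Suc (prod_encode (hd_code n, list_encode (list_decode (tl_code n))))"
    by (simp add: hd_code_def tl_code_def)
  then show ?thesis
    using Suc by (metis Suc_prod_encode_mem_rel_diag nat.simps(3))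
qed (simp add: zero_not_mem_rel_diag)

lemma mem_rel_diag_tagged_sum_iff_code:
  "n \<in> rel_diag (tagged_sig L) (tagged_sum S T) \<longleftrightarrow> n \<noteq> 0 \<and> hd_code n \<in> rels (tagged_sig L) \<and>
     length_code (tl_code n) = rar (tagged_sig L) (hd_code n) \<and>
     (\<forall>j<length_code (tl_code n). nth_code j (tl_code n) \<in> univ (tagged_sum S T)) \<and>
     tagged_atom_test L S T (hd_code n) (tl_code n)"
proof -
  define as where "as = list_decode (tl_code n)"
  have t: "tl_code n = list_encode as"
    by (simp add: as_def)
  have "set as \<subseteq> univ (tagged_sum S T) \<longleftrightarrow> (\<forall>j<length as. as ! j \<in> univ (tagged_sum S T))"
    by (auto simp: subset_iff in_set_conv_nth)
  then show ?thesis
    unfolding mem_rel_diag_iff_code t as_def[symmetric] list_encode_inverse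
    using tagged_atom_test_correct[of "hd_code n" L as S T]
    by (auto simp: length_code_list_encode nth_code_list_encode simp del: list_encode.simps)
qed

lemma comp_pred_n_All_nth_code:
  assumes P: "comp_pred_n X 2 (\<lambda>ys. P (ys ! 0) (ys ! 1))"
    and B: "comp_fun_n X k B" and C: "comp_fun_n X k C"
  shows "comp_pred_n X k (\<lambda>xs. \<forall>j<length_code (B xs). P (nth_code j (B xs)) (C xs))"
proof -
  have "comp_pred_n X (Suc k) (\<lambda>ys. P (nth_code (ys ! 0) (B (tl ys))) (C (tl ys)))"
    using P unfolding comp_pred_n_def
    by (rule comp_fun_n_comp2[where g="\<lambda>a b. if P a b then 1 else 0"])
      (intro comp_fun_n_nth_code comp_fun_n_Proj comp_fun_n_tl_arg B C; simp)+
  from comp_pred_n_All_less[OF this comp_fun_n_length_code[OF B]] show ?thesis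
    by simp
qed

lemma comp_pred_n_tagged_atom_test:
  assumes "comp_set X (rel_diag L S)" "comp_set X (rel_diag L T)"
    and "comp_fun X (fun_table L S)" "comp_fun X (fun_table L T)"
    and "comp_fun_n X k A" "comp_fun_n X k B"
  shows "comp_pred_n X k (\<lambda>xs. tagged_atom_test L S T (A xs) (B xs))"
proof -
  have "comp_pred_n X 2 (\<lambda>ys. tag (ys ! 0) = ys ! 1)"
    by (intro comp_pred_n_eq comp_fun_n_tag comp_fun_n_Proj) simp_all
  then have same_tag: "comp_pred_n X k
      (\<lambda>xs. \<forall>j<length_code (B xs). tag (nth_code j (B xs)) = tag (hd_code (B xs)))"
    using assms(6) by (intro comp_pred_n_All_nth_code comp_fun_n_tag comp_fun_n_hd_code)
  have elt: "comp_fun X elt"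
    unfolding comp_fun_iff_comp_fun_n by (intro comp_fun_n_elt comp_fun_n_Proj) simp
  show ?thesis
    unfolding tagged_atom_test_def mem_rel_diag_summand fun_table_summand
    by (intro comp_pred_n_If comp_pred_n_conj comp_pred_n_eq comp_pred_n_mem same_tag assms
        comp_fun_n_If comp_fun_n_comp_fun[OF assms(3)] comp_fun_n_comp_fun[OF assms(4)]
        comp_fun_n_Suc comp_fun_n_prod_encode comp_fun_n_map_code[OF elt] comp_fun_n_tag
        comp_fun_n_elt comp_fun_n_nth_code comp_fun_n_hd_code comp_fun_n_tl_code
        comp_fun_n_sym_kind comp_fun_n_sym_index comp_fun_n_const)
qed

lemma comp_set_rel_diag_tagged_sum:
  assumes "comp_sig L" and "comp_struc L S" and "comp_struc L T"
  shows "comp_set {} (rel_diag (tagged_sig L) (tagged_sum S T))"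
proof -
  have L: "comp_set {} (rels (tagged_sig L))" "comp_fun {} (rar (tagged_sig L))"
    using comp_sig_tagged_sig[OF assms(1)] by (simp_all add: comp_sig_def)
  have S: "comp_set {} (univ S)" "comp_set {} (rel_diag L S)" "comp_fun {} (fun_table L S)"
    and T: "comp_set {} (univ T)" "comp_set {} (rel_diag L T)" "comp_fun {} (fun_table L T)"
    using assms(2,3) by (simp_all add: comp_struc_def)
  have "comp_pred_n {} 2 (\<lambda>ys. ys ! 0 \<in> univ (tagged_sum S T))"
    by (intro comp_pred_n_mem comp_set_univ_tagged_sum S(1) T(1) comp_fun_n_Proj) simp
  note all_univ = comp_pred_n_All_nth_code[OF this _ comp_fun_n_const[of _ _ 0]]
  have "comp_pred_n {} 1 (\<lambda>xs. xs ! 0 \<in> rel_diag (tagged_sig L) (tagged_sum S T))"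
    unfolding mem_rel_diag_tagged_sum_iff_code
    by (intro comp_pred_n_conj comp_pred_n_not comp_pred_n_eq comp_pred_n_mem L
        all_univ comp_pred_n_tagged_atom_test S(2,3) T(2,3)
        comp_fun_n_comp_fun[OF L(2)] comp_fun_n_length_code comp_fun_n_hd_code comp_fun_n_tl_code
        comp_fun_n_Proj comp_fun_n_const) simp_all
  then show ?thesis
    unfolding comp_set_iff_comp_pred_n .
qed

lemma comp_struc_tagged_sum:
  assumes "comp_sig L" and "comp_struc L S" and "comp_struc L T"
  shows "comp_struc (tagged_sig L) (tagged_sum S T)"
proof -
  obtain x where "x \<in> univ S"
    using assms(2) by (auto simp: comp_struc_def wf_struc_def)
  then have "tagged 0 x \<in> univ (tagged_sum S T)"
    by (simp add: mem_univ_tagged_sum)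
  then have "wf_struc (tagged_sig L) (tagged_sum S T)"
    unfolding wf_struc_def by auto
  moreover have "comp_set {} (univ (tagged_sum S T))"
    using assms(2,3) by (intro comp_set_univ_tagged_sum) (simp_all add: comp_struc_def)
  moreover have "fun_table (tagged_sig L) (tagged_sum S T) = (\<lambda>n. 0)"
    by (auto simp: fun_table_def split: list.split)
  then have "comp_fun {} (fun_table (tagged_sig L) (tagged_sum S T))"
    by (simp add: comp_fun_iff_comp_fun_n comp_fun_n_const)
  ultimately show ?thesis
    using comp_set_rel_diag_tagged_sum[OF assms] by (simp add: comp_struc_def)
qed

theorem proposition3p4:
  fixes D :: "nat set"
  shows "low_for_embeddings D \<longleftrightarrow> low_for_biembeddings D"
proof
  assume "low_for_embeddings D"
  then show "low_for_biembeddings D"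
    unfolding low_for_embeddings_def low_for_biembeddings_def biemb_X_def by blast
next
  assume low: "low_for_biembeddings D"
  show "low_for_embeddings D"
    unfolding low_for_embeddings_def
  proof (intro allI impI)
    fix L A B
    assume comp: "comp_sig L \<and> comp_struc L A \<and> comp_struc L B" and "emb_X D L A B"
    then have wf: "wf_struc L A" "wf_struc L B"
      by (simp_all add: comp_struc_def)
    have "biemb_X D (tagged_sig L) (tagged_sum A B) (tagged_sum B B)"
      using wf \<open>emb_X D L A B\<close> by (rule biemb_X_tagged_sum)
    moreover have "comp_sig (tagged_sig L)"
      "comp_struc (tagged_sig L) (tagged_sum A B)" "comp_struc (tagged_sig L) (tagged_sum B B)"
      using comp by (simp_all add: comp_sig_tagged_sig comp_struc_tagged_sum)
    ultimately have "biemb_X {} (tagged_sig L) (tagged_sum A B) (tagged_sum B B)"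
      using low unfolding low_for_biembeddings_def by blast
    then show "emb_X {} L A B"
      unfolding biemb_X_def using emb_X_from_tagged_sum[OF wf(1)] by blast
  qed
qed

end
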